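(* Let $\mathcal N$ be a real normed space with norm $\|\cdot\|$ and origin $o$. Let $v_1,v_2\in\mathcal N$ and $\lambda_1,\lambda_2\geq 0$ be such that $\max\{\lambda_1,\lambda_2\}\geq 1$, $v_1\notin\operatorname{int}B(v_2,\lambda_2)$, $v_2\notin\operatorname{int}B(v_1,\lambda_1)$, and $B(v_i,\lambda_i)\cap B(o,1)\neq\emptyset$ for $i=1,2$. Define $\pi\colon\mathcal N\to B(o,2)$ by $\pi(x)=x$ if $\|x\|\leq 2$ and $\pi(x)=\frac{2}{\|x\|}x$ if $\|x\|\geq 2$. Then $\|\pi(v_1)-\pi(v_2)\|\geq 1$.
   Context: For $c\in\mathcal N$ and $r\geq 0$, $B(c,r)=\{x\in\mathcal N:\|x-c\|\leq r\}$ denotes the closed ball and $\operatorname{int}B(c,r)$ its interior. *)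

theory Defs
  imports "HOL-Analysis.Analysis"
begin

definition proj2 :: "'a::real_normed_vector \<Rightarrow> 'a" where
  "proj2 x = (if norm x \<le> 2 then x else (2 / norm x) *\<^sub>R x)"

end

theory Submission
  imports Defs
begin

text \<open>
  The hypotheses give \<open>\<parallel>v\<^sub>1 - v\<^sub>2\<parallel> \<ge> max {\<lambda>\<^sub>1, \<lambda>\<^sub>2}\<close>, hence
  \<open>\<parallel>v\<^sub>1 - v\<^sub>2\<parallel> \<ge> 1\<close> and \<open>\<parallel>v\<^sub>1 - v\<^sub>2\<parallel> \<ge> \<parallel>v\<^sub>i\<parallel> - 1\<close>. Write the projection as
  \<open>\<pi>(x) = (2 / t) x\<close> with \<open>t = max {\<parallel>x\<parallel>, 2}\<close>. If \<open>r = \<parallel>a\<parallel> > 2\<close> is the larger norm and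
  \<open>t\<close> belongs to \<open>b\<close>, then \<open>a - b = (1 - t/r) a + (t/2)(\<pi>(a) - \<pi>(b))\<close>, so
  \<open>r - 1 \<le> \<parallel>a - b\<parallel> \<le> (r - t) + (t/2) \<parallel>\<pi>(a) - \<pi>(b)\<parallel>\<close>, which forces
  \<open>\<parallel>\<pi>(a) - \<pi>(b)\<parallel> \<ge> 2 - 2/t \<ge> 1\<close>.
\<close>

lemma proj2_eq_scaleR_max: "proj2 x = (2 / max (norm x) 2) *\<^sub>R x"
  by (simp add: proj2_def max_def)

lemma radius_le_dist_if_not_in_interior_cball:
  fixes c x :: "'a::metric_space"
  assumes "x \<notin> interior (cball c r)"
  shows "r \<le> dist c x"
proof (rule ccontr)
  assume "\<not> r \<le> dist c x"
  then have "x \<in> ball c r" by simp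
  then have "x \<in> interior (cball c r)"
    using interior_maximal[OF ball_subset_cball open_ball] by blast
  with assms show False ..
qed

lemma norm_le_if_cball_meets_unit_cball:
  fixes v :: "'a::real_normed_vector"
  assumes "cball v l \<inter> cball 0 1 \<noteq> {}"
  shows "norm v \<le> 1 + l"
proof -
  obtain x where "dist v x \<le> l" "norm x \<le> 1"
    using assms by auto
  then show ?thesis
    using norm_triangle_ineq[of "v - x" x] by (simp add: dist_norm)
qed

lemma one_le_norm_proj2_diff_of_norm_le:
  fixes a b :: "'a::real_normed_vector"
  assumes "norm b \<le> norm a" and "1 \<le> norm (a - b)" and "norm a - 1 \<le> norm (a - b)"
  shows "1 \<le> norm (proj2 a - proj2 b)"
proof (cases "norm a \<le> 2")
  case True
  with assms show ?thesis by (simp add: proj2_def)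
next
  case False
  define r where "r = norm a"
  define t where "t = max (norm b) 2"
  have "2 \<le> t" "t \<le> r" "2 < r"
    using False assms(1) by (auto simp: r_def t_def)
  have pa: "proj2 a = (2 / r) *\<^sub>R a" and pb: "proj2 b = (2 / t) *\<^sub>R b"
    using False by (auto simp: proj2_eq_scaleR_max r_def t_def max_def)
  have "a - b = (1 - t / r) *\<^sub>R a + (t / 2) *\<^sub>R (proj2 a - proj2 b)"
    using \<open>2 \<le> t\<close> \<open>2 < r\<close> by (simp add: pa pb algebra_simps)
  then have "norm (a - b) \<le> \<bar>1 - t / r\<bar> * r + (t / 2) * norm (proj2 a - proj2 b)"
    using \<open>2 \<le> t\<close> norm_triangle_ineq[of "(1 - t / r) *\<^sub>R a" "(t / 2) *\<^sub>R (proj2 a - proj2 b)"]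
    by (simp add: r_def)
  also have "\<bar>1 - t / r\<bar> * r = r - t"
    using \<open>t \<le> r\<close> \<open>2 < r\<close> by (simp add: field_simps)
  finally have "t - 1 \<le> (t / 2) * norm (proj2 a - proj2 b)"
    using assms(3) r_def by linarith
  then have "t * 1 \<le> t * norm (proj2 a - proj2 b)"
    using \<open>2 \<le> t\<close> by linarith
  then show ?thesis
    using \<open>2 \<le> t\<close> by simp
qed

lemma one_le_norm_proj2_diff:
  fixes a b :: "'a::real_normed_vector"
  assumes "1 \<le> norm (a - b)" and "norm a - 1 \<le> norm (a - b)" and "norm b - 1 \<le> norm (a - b)"
  shows "1 \<le> norm (proj2 a - proj2 b)"
proof (cases "norm b \<le> norm a")
  case True
  then show ?thesis
    using assms(1,2) by (rule one_le_norm_proj2_diff_of_norm_le)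
next
  case False
  with assms have "1 \<le> norm (proj2 b - proj2 a)"
    by (intro one_le_norm_proj2_diff_of_norm_le) (simp_all add: norm_minus_commute)
  then show ?thesis by (simp add: norm_minus_commute)
qed

theorem mainTheorem3:
  fixes v1 v2 :: "'a::real_normed_vector" and l1 l2 :: real
  assumes "l1 \<ge> 0" and "l2 \<ge> 0"
    and "max l1 l2 \<ge> 1"
    and "v1 \<notin> interior (cball v2 l2)"
    and "v2 \<notin> interior (cball v1 l1)"
    and "cball v1 l1 \<inter> cball 0 1 \<noteq> {}"
    and "cball v2 l2 \<inter> cball 0 1 \<noteq> {}"
  shows "norm (proj2 v1 - proj2 v2) \<ge> 1"
proof -
  have "l1 \<le> norm (v1 - v2)"
    using radius_le_dist_if_not_in_interior_cball[OF assms(5)] by (simp add: dist_norm)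
  moreover have "l2 \<le> norm (v1 - v2)"
    using radius_le_dist_if_not_in_interior_cball[OF assms(4)]
    by (simp add: dist_norm norm_minus_commute)
  moreover have "norm v1 \<le> 1 + l1" "norm v2 \<le> 1 + l2"
    using assms(6,7) by (simp_all add: norm_le_if_cball_meets_unit_cball)
  ultimately show ?thesis
    using assms(3) by (intro one_le_norm_proj2_diff) linarith+
qed

end
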